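(* Let $d\in\mathbb{N}$, $\mathfrak{d}\in\{1,2,\ldots,d-1\}$, let $U\subseteq\mathbb{R}^d$ be an open set, let $f\colon\mathbb{R}^d\to\mathbb{R}$ be a function whose restriction $f|_U$ is three times continuously differentiable, let $\mathcal{M}=\{\theta\in\mathbb{R}^d\colon f(\theta)=\inf_{\vartheta\in\mathbb{R}^d}f(\vartheta)\}$, assume that $\mathcal{M}\cap U$ is a non-empty $\mathfrak{d}$-dimensional $C^1$-submanifold of $\mathbb{R}^d$, and assume for every $\theta\in\mathcal{M}\cap U$ that $\operatorname{rank}((\operatorname{Hess}f)(\theta))=d-\mathfrak{d}$. Then for every $x_0\in\mathcal{M}\cap U$ there exist $R_0,\delta_0,\lambda\in(0,\infty)$ such that for every $R\in(0,R_0]$, $\delta\in(0,\delta_0]$, $\theta_0\in V_{R/2,\delta}(x_0)$ and every $\theta\colon[0,\infty)\to\mathbb{R}^d$, $t\mapsto\theta_t$, starting at $\theta_0$ and satisfying $\frac{d}{dt}\theta_t=-\nabla f(\theta_t)$ for $t\in(0,\infty)$, it holds for every $t\in[0,\infty)$ that \[\operatorname{d}(\theta_t,\mathcal{M}\cap U)\le\exp(-\lambda t)\operatorname{d}(\theta_0,\mathcal{M}\cap U).\]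
   Context: $\operatorname{d}(x,\mathcal{A})=\inf_{\vartheta\in\mathcal{A}}|x-\vartheta|$. For $R,\delta>0$ and $x_0\in\mathcal{M}\cap U$, $V_{R,\delta}(x_0)=\{x+v\colon x\in\overline{B}_R(x_0)\cap\mathcal{M}\cap U,\ v\in T_x(\mathcal{M}\cap U)^\perp,\ |v|<\delta\}$, where $\overline{B}_R(x_0)$ is the closed ball and $T_x(\cdot)^\perp$ the orthogonal complement of the tangent space. *)

theory Defs
  imports "HOL-Analysis.Analysis"
begin

definition C1_on :: "'a::real_normed_vector set \<Rightarrow> ('a \<Rightarrow> 'b::real_normed_vector) \<Rightarrow> bool" where
  "C1_on W g \<longleftrightarrow> (\<exists>g'. (\<forall>x\<in>W. (g has_derivative blinfun_apply (g' x)) (at x)) \<and> continuous_on W g')"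

definition C3_on :: "'a::euclidean_space set \<Rightarrow> ('a \<Rightarrow> real) \<Rightarrow> bool" where
  "C3_on U f \<longleftrightarrow> (\<exists>G H. (\<forall>x\<in>U. (f has_derivative (\<lambda>h. G x \<bullet> h)) (at x)) \<and>
                        (\<forall>x\<in>U. (G has_derivative blinfun_apply (H x)) (at x)) \<and> C1_on U H)"

definition gradient :: "('a::euclidean_space \<Rightarrow> real) \<Rightarrow> 'a \<Rightarrow> 'a" where
  "gradient f x = (THE g. (f has_derivative (\<lambda>h. g \<bullet> h)) (at x))"

definition hessian :: "('a::euclidean_space \<Rightarrow> real) \<Rightarrow> 'a \<Rightarrow> 'a \<Rightarrow> 'a" where
  "hessian f x = frechet_derivative (gradient f) (at x)"

definition minset :: "('a \<Rightarrow> real) \<Rightarrow> 'a set" where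
  "minset f = {\<theta>. \<forall>y. f \<theta> \<le> f y}"

definition C1_submanifold :: "nat \<Rightarrow> 'a::euclidean_space set \<Rightarrow> bool" where
  "C1_submanifold k S \<longleftrightarrow> (\<forall>p\<in>S. \<exists>W (\<Phi>::'a\<Rightarrow>'a) \<Psi> L. open W \<and> p \<in> W \<and> open (\<Phi> ` W) \<and>
      homeomorphism W (\<Phi> ` W) \<Phi> \<Psi> \<and> C1_on W \<Phi> \<and> C1_on (\<Phi> ` W) \<Psi> \<and>
      subspace L \<and> dim L = k \<and> \<Phi> ` (S \<inter> W) = \<Phi> ` W \<inter> L)"

definition tangent_space :: "'a::euclidean_space set \<Rightarrow> 'a \<Rightarrow> 'a set" where
  "tangent_space S x = {v. \<exists>\<gamma> e. e > 0 \<and> \<gamma> 0 = x \<and> (\<forall>t\<in>{-e<..<e}. \<gamma> t \<in> S) \<and>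
      (\<gamma> has_vector_derivative v) (at 0)}"

definition Vnbhd :: "'a::euclidean_space set \<Rightarrow> real \<Rightarrow> real \<Rightarrow> 'a \<Rightarrow> 'a set" where
  "Vnbhd S R \<delta> x0 = {x + v | x v. x \<in> cball x0 R \<inter> S \<and>
      v \<in> orthogonal_comp (tangent_space S x) \<and> norm v < \<delta>}"

definition gradient_flow :: "('a::euclidean_space \<Rightarrow> real) \<Rightarrow> (real \<Rightarrow> 'a) \<Rightarrow> bool" where
  "gradient_flow f \<theta> \<longleftrightarrow> continuous_on {0..} \<theta> \<and>
     (\<forall>t>0. f differentiable (at (\<theta> t)) \<and>
            (\<theta> has_vector_derivative - gradient f (\<theta> t)) (at t))"

end

theory Submission
  imports Defs
begin

text \<open>Near a point x0 of M \<inter> U the Hessian is symmetric and positive semidefinite (M consists of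
  minima), its kernel contains the tangent space of M (the gradient vanishes on M), and by the rank
  hypothesis the two have the same dimension. Hence the Hessian is positive definite on normal
  vectors, uniformly on a compact neighbourhood of x0. The vector from a point \<theta> to a nearest
  point p of M is normal to M at p, so linearising the gradient at p yields, on a ball around x0,
  the restricted secant inequality \<mu> |\<theta> - p|^2 \<le> \<nabla>f(\<theta>) \<bullet> (\<theta> - p) together with
  |\<nabla>f(\<theta>)| \<le> L |\<theta> - p|.

  Along the gradient flow the first inequality makes exp(2 \<mu> t) d(\<theta>_t, M)^2 non-increasing while
  the trajectory stays in the ball, and then the second one bounds its length by
  L d(\<theta>_0, M) / \<mu>. A trajectory starting close enough to x0 therefore never leaves the ball.\<close>

section \<open>Positive semidefinite forms\<close>

lemma dim_kernel_add_dim_range_le: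
  fixes A :: "'a::euclidean_space \<Rightarrow> 'b::euclidean_space"
  assumes "linear A"
  shows "dim {x. A x = 0} + dim (range A) \<le> DIM('a)"
proof -
  define K where "K = {x. A x = 0}"
  have K: "subspace K" unfolding K_def using assms by (rule linear_subspace_kernel)
  define C where "C = {y. \<forall>x\<in>K. orthogonal x y}"
  have dim_C: "dim C + dim K = DIM('a)"
    using dim_subspace_orthogonal_to_vectors[OF K subspace_UNIV] by (simp add: C_def)
  have "range A \<subseteq> A ` C"
  proof
    fix z assume "z \<in> range A"
    then obtain x where x: "z = A x" by auto
    obtain y c where yc: "y \<in> span K" "\<And>w. w \<in> span K \<Longrightarrow> orthogonal c w" "x = y + c"
      using orthogonal_subspace_decomp_exists[of K x] by metis
    have "y \<in> K" using yc(1) K by (metis span_eq_iff)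
    hence "A y = 0" by (simp add: K_def)
    hence "A x = A c" using yc(3) assms by (simp add: linear_add)
    moreover have "c \<in> C" using yc(2) span_base by (auto simp: C_def orthogonal_commute)
    ultimately show "z \<in> A ` C" using x by auto
  qed
  hence "dim (range A) \<le> dim (A ` C)" by (rule dim_subset)
  also have "\<dots> \<le> dim C" using assms by (rule dim_image_le)
  finally show ?thesis using dim_C by (simp add: K_def)
qed

lemma kernel_eq_if_dim_ge:
  fixes A :: "'a::euclidean_space \<Rightarrow> 'b::euclidean_space"
  assumes "linear A" "subspace N" "N \<subseteq> {x. A x = 0}" "DIM('a) \<le> dim N + dim (range A)"
  shows "N = {x. A x = 0}"
proof (rule subspace_dim_equal)
  show "subspace {x. A x = 0}" using assms(1) by (rule linear_subspace_kernel)
  show "dim {x. A x = 0} \<le> dim N" using dim_kernel_add_dim_range_le[OF assms(1)] assms(4) by linarith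
qed (use assms in auto)

lemma psd_form_zero_imp_zero:
  fixes A :: "'a::real_inner \<Rightarrow> 'a"
  assumes "linear A" and sym: "\<And>u v. A u \<bullet> v = A v \<bullet> u" and psd: "\<And>z. 0 \<le> A z \<bullet> z"
    and "A w \<bullet> w = 0"
  shows "A w = 0"
proof -
  define a where "a = A w \<bullet> A w"
  define b where "b = A (A w) \<bullet> A w"
  have quad: "A (w - t *\<^sub>R A w) \<bullet> (w - t *\<^sub>R A w) = t * (t * b - 2 * a)" for t
    using \<open>linear A\<close> sym[of w "A w"] \<open>A w \<bullet> w = 0\<close>
    by (simp add: a_def b_def linear_diff linear_scale algebra_simps)
  have "a \<le> 0"
  proof (rule ccontr)
    assume "\<not> a \<le> 0"
    define t where "t = a / (\<bar>b\<bar> + 1)"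
    have "t > 0" "t * b < a" using \<open>\<not> a \<le> 0\<close>
      by (auto simp: t_def field_simps abs_if mult_less_cancel_left_pos split: if_splits)
    hence "t * (t * b - 2 * a) < 0" using \<open>\<not> a \<le> 0\<close> by (simp add: mult_pos_neg)
    thus False using psd quad by (metis not_le)
  qed
  thus ?thesis by (metis a_def inner_eq_zero_iff inner_ge_zero order_antisym)
qed

lemma psd_form_pos_off_kernel:
  fixes A :: "'a::real_inner \<Rightarrow> 'a"
  assumes "linear A" "\<And>u v. A u \<bullet> v = A v \<bullet> u" "\<And>z. 0 \<le> A z \<bullet> z"
    and "u \<noteq> 0" "\<And>x. A x = 0 \<Longrightarrow> u \<bullet> x = 0"
  shows "0 < A u \<bullet> u"
  using psd_form_zero_imp_zero[OF assms(1-3), of u] assms(3-5) by (metis order_le_less inner_eq_zero_iff)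

section \<open>Monotonicity from one-sided derivatives\<close>

lemma upper_right_dini_nonpos_imp_le:
  fixes g :: "real \<Rightarrow> real"
  assumes "a \<le> b" and cont: "continuous_on {a..b} g"
    and dini: "\<And>t \<epsilon> \<eta>. t \<in> {a<..<b} \<Longrightarrow> \<epsilon> > 0 \<Longrightarrow> \<eta> > 0 \<Longrightarrow>
      \<exists>h. 0 < h \<and> h < \<eta> \<and> g (t + h) \<le> g t + \<epsilon> * h"
  shows "g b \<le> g a"
proof (rule ccontr)
  assume "\<not> g b \<le> g a"
  hence gab: "g a < g b" by simp
  with \<open>a \<le> b\<close> have "a < b" by (cases "a = b") auto
  \<comment> \<open>Move the left end point to some a' < b with g a' < g b, so that the slope below is positive.\<close>
  obtain d where d: "d > 0" "\<And>x. x \<in> {a..b} \<Longrightarrow> dist x a < d \<Longrightarrow> dist (g x) (g a) < (g b - g a) / 2"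
    using cont \<open>a < b\<close> gab unfolding continuous_on_iff
    by (metis atLeastAtMost_iff half_gt_zero diff_gt_0_iff_gt order_refl less_imp_le)
  define a' where "a' = min (a + d/2) ((a + b)/2)"
  have a': "a < a'" "a' < b" using d \<open>a < b\<close> by (auto simp: a'_def min_def)
  have "dist (g a') (g a) < (g b - g a) / 2"
    using d a' by (intro d(2)) (auto simp: a'_def dist_real_def)
  hence ga': "g a' < g b" using abs_ge_self[of "g a' - g a"] gab by (simp add: dist_real_def)
  define \<epsilon> where "\<epsilon> = (g b - g a') / (2 * (b - a'))"
  have \<epsilon>: "\<epsilon> > 0" using ga' a' by (auto simp: \<epsilon>_def)
  define \<psi> where "\<psi> y = g y - \<epsilon> * y" for y
  have "\<epsilon> * (b - a') = (g b - g a') / 2" using a' by (simp add: \<epsilon>_def field_simps)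
  hence "\<psi> b - \<psi> a' = (g b - g a') / 2" by (simp add: \<psi>_def algebra_simps)
  hence \<psi>b: "\<psi> a' < \<psi> b" using ga' by simp
  \<comment> \<open>The last point y where \<psi> is still at most \<psi> a' contradicts the Dini condition at y.\<close>
  define Z where "Z = {y \<in> {a'..b}. \<psi> y \<le> \<psi> a'}"
  have "continuous_on {a'..b} \<psi>" unfolding \<psi>_def
    by (intro continuous_intros continuous_on_subset[OF cont]) (use a' in auto)
  hence "closed Z" unfolding Z_def
    by (rule continuous_on_closed_Collect_le) (auto intro: continuous_intros)
  have "a' \<in> Z" using a' by (auto simp: Z_def)
  have bdd: "bdd_above Z" unfolding Z_def by (rule bdd_aboveI[of _ b]) auto
  define y where "y = Sup Z"
  have "y \<in> Z" unfolding y_def using closed_contains_Sup \<open>closed Z\<close> bdd \<open>a' \<in> Z\<close> by blast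
  hence y: "a' \<le> y" "y \<le> b" "\<psi> y \<le> \<psi> a'" by (auto simp: Z_def)
  with \<psi>b have "y < b" by (cases "y = b") auto
  obtain h where h: "0 < h" "h < b - y" "g (y + h) \<le> g y + \<epsilon> * h"
    using dini[of y \<epsilon> "b - y"] \<epsilon> \<open>y < b\<close> y a' by auto
  have "\<psi> (y + h) \<le> \<psi> y" using h by (simp add: \<psi>_def algebra_simps)
  hence "y + h \<in> Z" using y h by (auto simp: Z_def)
  hence "y + h \<le> y" unfolding y_def using cSup_upper[OF _ bdd] by blast
  thus False using h by simp
qed

lemma touching_derivative_nonpos_imp_le:
  fixes g :: "real \<Rightarrow> real"
  assumes "a \<le> b" and "continuous_on {a..b} g"
    and touch: "\<And>t. t \<in> {a<..<b} \<Longrightarrow> \<exists>k k'. (k has_real_derivative k') (at t) \<and> k' \<le> 0 \<and>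
      k t = g t \<and> (\<forall>h>0. g (t + h) \<le> k (t + h))"
  shows "g b \<le> g a"
proof (rule upper_right_dini_nonpos_imp_le[OF assms(1,2)])
  fix t \<epsilon> \<eta> :: real
  assume "t \<in> {a<..<b}" "\<epsilon> > 0" "\<eta> > 0"
  then obtain k k' where k: "(k has_real_derivative k') (at t)" "k' \<le> 0" "k t = g t"
    "\<And>h. h > 0 \<Longrightarrow> g (t + h) \<le> k (t + h)"
    using touch by blast
  have "((\<lambda>h. (k (t + h) - k t) / h) \<longlongrightarrow> k') (at 0)"
    using k(1) by (simp add: DERIV_def)
  then obtain d where d: "d > 0" "\<And>h. h \<noteq> 0 \<Longrightarrow> norm h < d \<Longrightarrow> norm ((k (t + h) - k t) / h - k') < \<epsilon>"
    using \<open>\<epsilon> > 0\<close> unfolding LIM_eq by (metis diff_zero)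
  define h where "h = min d \<eta> / 2"
  have h: "0 < h" "h < \<eta>" "h < d" using d \<open>\<eta> > 0\<close> by (auto simp: h_def)
  have "(k (t + h) - k t) / h < \<epsilon>" using d(2)[of h] h k(2) by auto
  hence "g (t + h) \<le> g t + \<epsilon> * h" using h k(3) k(4)[of h] by (simp add: divide_less_eq)
  thus "\<exists>h. 0 < h \<and> h < \<eta> \<and> g (t + h) \<le> g t + \<epsilon> * h" using h by blast
qed

section \<open>Gradient and Hessian\<close>

lemma gradient_eqI:
  assumes "(f has_derivative (\<lambda>h. g \<bullet> h)) (at x)"
  shows "gradient f x = g"
  unfolding gradient_def
proof (rule the_equality)
  fix g' assume "(f has_derivative (\<lambda>h. g' \<bullet> h)) (at x)"
  hence "(\<lambda>h. g' \<bullet> h) = (\<lambda>h. g \<bullet> h)" using assms by (rule has_derivative_unique)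
  hence "(g' - g) \<bullet> (g' - g) = 0" by (metis inner_diff_left diff_self)
  thus "g' = g" by simp
qed (rule assms)

lemma C3_on_imp_gradient_hessian:
  fixes f :: "'a::euclidean_space \<Rightarrow> real"
  assumes "open U" "C3_on U f"
  obtains H :: "'a \<Rightarrow> 'a \<Rightarrow>\<^sub>L 'a" where "continuous_on U H"
    "\<And>x. x \<in> U \<Longrightarrow> (f has_derivative (\<lambda>h. gradient f x \<bullet> h)) (at x)"
    "\<And>x. x \<in> U \<Longrightarrow> (gradient f has_derivative blinfun_apply (H x)) (at x)"
    "\<And>x. x \<in> U \<Longrightarrow> hessian f x = blinfun_apply (H x)"
proof -
  obtain G H where fG: "\<And>x. x \<in> U \<Longrightarrow> (f has_derivative (\<lambda>h. G x \<bullet> h)) (at x)"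
    and GH: "\<And>x. x \<in> U \<Longrightarrow> (G has_derivative blinfun_apply (H x)) (at x)" and "C1_on U H"
    using assms(2) unfolding C3_on_def by blast
  then obtain H' where "\<And>x. x \<in> U \<Longrightarrow> (H has_derivative blinfun_apply (H' x)) (at x)"
    unfolding C1_on_def by blast
  hence "continuous_on U H"
    by (meson continuous_at_imp_continuous_on has_derivative_continuous)
  moreover have grad: "gradient f x = G x" if "x \<in> U" for x
    using fG[OF that] by (rule gradient_eqI)
  moreover have "(gradient f has_derivative blinfun_apply (H x)) (at x)" if "x \<in> U" for x
    using GH[OF that] \<open>open U\<close> that by (rule has_derivative_transform_within_open) (simp add: grad)
  moreover from this have "hessian f x = blinfun_apply (H x)" if "x \<in> U" for x
    using that unfolding hessian_def by (simp add: frechet_derivative_at[symmetric])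
  ultimately show ?thesis using that fG grad by auto
qed

lemma linearization_error_le:
  fixes G :: "'a::real_normed_vector \<Rightarrow> 'b::real_normed_vector"
  assumes "convex T" "x \<in> T" "z \<in> T"
    and der: "\<And>y. y \<in> T \<Longrightarrow> (G has_derivative blinfun_apply (H y)) (at y)"
    and bound: "\<And>y. y \<in> T \<Longrightarrow> norm (H y - H0) \<le> \<epsilon>"
  shows "norm (G z - G x - H0 (z - x)) \<le> \<epsilon> * norm (z - x)"
proof -
  have "norm ((G z - H0 z) - (G x - H0 x)) \<le> \<epsilon> * norm (z - x)"
  proof (rule differentiable_bound[of T _ "\<lambda>y. blinfun_apply (H y - H0)"])
    fix y assume "y \<in> T"
    have "((\<lambda>y. G y - H0 y) has_derivative (\<lambda>h. H y h - H0 h)) (at y)"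
      using der[OF \<open>y \<in> T\<close>] blinfun.bounded_linear_right[THEN bounded_linear_imp_has_derivative]
      by (rule has_derivative_diff)
    thus "((\<lambda>y. G y - H0 y) has_derivative blinfun_apply (H y - H0)) (at y within T)"
      by (simp add: minus_blinfun.rep_eq fun_diff_def has_derivative_at_withinI)
    show "onorm (blinfun_apply (H y - H0)) \<le> \<epsilon>"
      using bound[OF \<open>y \<in> T\<close>] by (simp add: norm_blinfun.rep_eq[symmetric])
  qed (use assms in auto)
  thus ?thesis by (simp add: blinfun.diff_right algebra_simps)
qed

lemma inner_derivative_eq_0_at_local_min:
  assumes "open U" "p \<in> U" "\<And>y. y \<in> U \<Longrightarrow> f p \<le> f y"
    and "(f has_derivative (\<lambda>h. g \<bullet> h)) (at p)"
  shows "g = 0"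
proof -
  have "(\<lambda>h. g \<bullet> h) = (\<lambda>h. 0)"
    by (rule differential_zero_maxmin[of p U f]) (use assms in auto)
  hence "g \<bullet> g = 0" by metis
  thus ?thesis by simp
qed

lemma has_real_derivative_inner_along_line:
  assumes "(G has_derivative A) (at p)"
  shows "((\<lambda>\<tau>. G (p + \<tau> *\<^sub>R w) \<bullet> w) has_real_derivative A w \<bullet> w) (at 0)"
proof -
  have "((\<lambda>\<tau>. p + \<tau> *\<^sub>R w) has_derivative (\<lambda>h. h *\<^sub>R w)) (at 0)"
    by (intro derivative_eq_intros) auto
  from has_derivative_compose[OF this] assms
  have "((\<lambda>\<tau>. G (p + \<tau> *\<^sub>R w)) has_derivative (\<lambda>h. A (h *\<^sub>R w))) (at 0)" by simp
  hence "((\<lambda>\<tau>. G (p + \<tau> *\<^sub>R w) \<bullet> w) has_derivative (\<lambda>h. A (h *\<^sub>R w) \<bullet> w)) (at 0)"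
    by (intro derivative_intros)
  moreover have "A (h *\<^sub>R w) \<bullet> w = h * (A w \<bullet> w)" for h
    using has_derivative_bounded_linear[OF assms] by (simp add: linear_simps)
  ultimately show ?thesis
    by (simp add: has_field_derivative_def mult.commute[of _ "A w \<bullet> w"])
qed

lemma hessian_psd_at_local_min:
  fixes f :: "'a::euclidean_space \<Rightarrow> real"
  assumes "open U" "p \<in> U" and min: "\<And>y. y \<in> U \<Longrightarrow> f p \<le> f y"
    and fG: "\<And>y. y \<in> U \<Longrightarrow> (f has_derivative (\<lambda>h. G y \<bullet> h)) (at y)"
    and GA: "(G has_derivative A) (at p)"
  shows "0 \<le> A w \<bullet> w"
proof (rule ccontr)
  assume "\<not> 0 \<le> A w \<bullet> w"
  define \<phi>' where "\<phi>' \<tau> = G (p + \<tau> *\<^sub>R w) \<bullet> w" for \<tau>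
  have "G p = 0" using inner_derivative_eq_0_at_local_min[OF assms(1-3) fG[OF assms(2)]] .
  have "(\<phi>' has_real_derivative A w \<bullet> w) (at 0)"
    unfolding \<phi>'_def by (rule has_real_derivative_inner_along_line[OF GA])
  \<comment> \<open>A negative second derivative makes the directional derivative negative just right of 0.\<close>
  hence "\<exists>d>0. \<forall>h>0. h < d \<longrightarrow> \<phi>' (0 + h) < \<phi>' 0"
    using DERIV_neg_dec_right \<open>\<not> 0 \<le> A w \<bullet> w\<close> by (metis not_le)
  then obtain d where d: "d > 0" "\<And>h. 0 < h \<Longrightarrow> h < d \<Longrightarrow> \<phi>' h < 0"
    using \<open>G p = 0\<close> by (auto simp: \<phi>'_def)
  obtain e where e: "e > 0" "ball p e \<subseteq> U" using assms(1,2) openE by metis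
  define \<tau>0 where "\<tau>0 = min d (e / (norm w + 1)) / 2"
  have nw: "0 < norm w + 1" using norm_ge_zero[of w] by linarith
  hence \<tau>0: "0 < \<tau>0" "\<tau>0 < d" using d e by (auto simp: \<tau>0_def)
  have "\<tau>0 \<le> e / (norm w + 1) / 2" unfolding \<tau>0_def by (intro divide_right_mono) auto
  hence \<tau>0_e: "\<tau>0 * (norm w + 1) \<le> e / 2" using nw by (simp add: field_simps)
  have inU: "p + \<tau> *\<^sub>R w \<in> U" if "0 \<le> \<tau>" "\<tau> \<le> \<tau>0" for \<tau>
  proof -
    have "\<tau> * norm w \<le> \<tau>0 * (norm w + 1)" using that \<tau>0 by (intro mult_mono) auto
    also have "\<dots> < e" using \<tau>0_e e by linarith
    finally show ?thesis using e(2) that by (auto simp: dist_norm)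
  qed
  have "DERIV (\<lambda>\<tau>. f (p + \<tau> *\<^sub>R w)) \<tau> :> \<phi>' \<tau>" if "0 \<le> \<tau>" "\<tau> \<le> \<tau>0" for \<tau>
  proof -
    have "((\<lambda>\<tau>. p + \<tau> *\<^sub>R w) has_derivative (\<lambda>h. h *\<^sub>R w)) (at \<tau>)"
      by (intro derivative_eq_intros) auto
    from has_derivative_compose[OF this fG[OF inU[OF that]]]
    show ?thesis unfolding has_field_derivative_def \<phi>'_def
      by (rule has_derivative_eq_rhs) (simp add: fun_eq_iff)
  qed
  then obtain z where z: "0 < z" "z < \<tau>0" "f (p + \<tau>0 *\<^sub>R w) - f (p + 0 *\<^sub>R w) = (\<tau>0 - 0) * \<phi>' z"
    using MVT2[of 0 \<tau>0 "\<lambda>\<tau>. f (p + \<tau> *\<^sub>R w)" \<phi>'] \<tau>0 by blast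
  have "\<tau>0 * \<phi>' z < 0" using d(2)[of z] z \<tau>0 by (simp add: mult_pos_neg)
  hence "f (p + \<tau>0 *\<^sub>R w) < f p" using z(3) by simp
  thus False using min[OF inU] \<tau>0 by (meson less_le_not_le order_refl)
qed

lemma second_difference_le:
  fixes f :: "'a::euclidean_space \<Rightarrow> real"
  assumes fG: "\<And>y. y \<in> ball x (2 * \<rho>) \<Longrightarrow> (f has_derivative (\<lambda>h. G y \<bullet> h)) (at y)"
    and GH: "\<And>y. y \<in> ball x (2 * \<rho>) \<Longrightarrow> (G has_derivative blinfun_apply (H y)) (at y)"
    and H_near: "\<And>y. y \<in> ball x (2 * \<rho>) \<Longrightarrow> norm (H y - H x) \<le> \<epsilon>"
    and a: "norm a < \<rho>" and b: "norm b < \<rho>"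
  shows "\<bar>f (x + a + b) - f (x + a) - f (x + b) + f x - H x b \<bullet> a\<bar> \<le> \<epsilon> * norm a * norm b"
proof -
  \<comment> \<open>Mean value estimate for the first difference g in direction b, moved along a.\<close>
  define g where "g y = f (y + b) - f y - H x b \<bullet> y" for y
  have "0 < \<rho>" using b norm_ge_zero[of b] by linarith
  have "norm (g (x + a) - g x) \<le> (\<epsilon> * norm b) * norm ((x + a) - x)"
  proof (rule differentiable_bound[of "ball x \<rho>" g "\<lambda>y h. (G (y + b) - G y - H x b) \<bullet> h"])
    fix y assume y: "y \<in> ball x \<rho>"
    with \<open>0 < \<rho>\<close> have yb: "y + b \<in> ball x (2 * \<rho>)" "y \<in> ball x (2 * \<rho>)"
      using b norm_triangle_ineq[of "y - x" b] by (auto simp: dist_norm norm_minus_commute algebra_simps)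
    have "((\<lambda>y. f (y + b)) has_derivative (\<lambda>h. G (y + b) \<bullet> h)) (at y)"
      using has_derivative_compose[OF has_derivative_add_const[OF has_derivative_ident] fG[OF yb(1)]]
      by simp
    hence "(g has_derivative (\<lambda>h. G (y + b) \<bullet> h - G y \<bullet> h - H x b \<bullet> h)) (at y)"
      unfolding g_def using fG[OF yb(2)]
      by (intro derivative_intros bounded_linear_imp_has_derivative bounded_linear_inner_right)
    thus "(g has_derivative (\<lambda>h. (G (y + b) - G y - H x b) \<bullet> h)) (at y within ball x \<rho>)"
      by (auto intro: has_derivative_at_withinI simp: inner_diff_left)
    have "norm (G (y + b) - G y - H x ((y + b) - y)) \<le> \<epsilon> * norm ((y + b) - y)"
      by (rule linearization_error_le[of "ball x (2 * \<rho>)"]) (use yb H_near GH in auto)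
    hence "norm (G (y + b) - G y - H x b) \<le> \<epsilon> * norm b" by simp
    show "onorm (\<lambda>h. (G (y + b) - G y - H x b) \<bullet> h) \<le> \<epsilon> * norm b"
    proof (rule onorm_le)
      fix h
      have "\<bar>(G (y + b) - G y - H x b) \<bullet> h\<bar> \<le> norm (G (y + b) - G y - H x b) * norm h"
        by (rule Cauchy_Schwarz_ineq2)
      also have "\<dots> \<le> \<epsilon> * norm b * norm h"
        using \<open>norm (G (y + b) - G y - H x b) \<le> \<epsilon> * norm b\<close> by (simp add: mult_right_mono)
      finally show "norm ((G (y + b) - G y - H x b) \<bullet> h) \<le> \<epsilon> * norm b * norm h" by simp
    qed
  qed (use a \<open>0 < \<rho>\<close> in \<open>auto simp: dist_norm\<close>)
  moreover have "g (x + a) - g x = f (x + a + b) - f (x + a) - f (x + b) + f x - H x b \<bullet> a"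
    by (simp add: g_def inner_add_right algebra_simps)
  ultimately show ?thesis by (simp add: algebra_simps)
qed

lemma second_difference_estimate:
  fixes f :: "'a::euclidean_space \<Rightarrow> real"
  assumes "open U" "x \<in> U"
    and fG: "\<And>y. y \<in> U \<Longrightarrow> (f has_derivative (\<lambda>h. G y \<bullet> h)) (at y)"
    and GH: "\<And>y. y \<in> U \<Longrightarrow> (G has_derivative blinfun_apply (H y)) (at y)"
    and "continuous_on U H" "\<epsilon> > 0"
  obtains \<rho> where "\<rho> > 0" "\<And>a b. norm a < \<rho> \<Longrightarrow> norm b < \<rho> \<Longrightarrow>
    \<bar>f (x + a + b) - f (x + a) - f (x + b) + f x - H x b \<bullet> a\<bar> \<le> \<epsilon> * norm a * norm b"
proof -
  obtain d where d: "d > 0" "\<And>y. y \<in> U \<Longrightarrow> dist y x < d \<Longrightarrow> dist (H y) (H x) < \<epsilon>"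
    using assms(2,5,6) unfolding continuous_on_iff by metis
  obtain e where e: "e > 0" "ball x e \<subseteq> U" using assms(1,2) openE by metis
  define \<rho> where "\<rho> = min d e / 2"
  have inU: "y \<in> U" if "y \<in> ball x (2 * \<rho>)" for y using that e by (auto simp: \<rho>_def)
  have "norm (H y - H x) \<le> \<epsilon>" if "y \<in> ball x (2 * \<rho>)" for y
  proof -
    have "dist y x < d" using that by (auto simp: \<rho>_def dist_commute)
    thus ?thesis using d(2)[OF inU[OF that]] by (simp add: dist_norm)
  qed
  with fG GH inU have "\<bar>f (x + a + b) - f (x + a) - f (x + b) + f x - H x b \<bullet> a\<bar> \<le> \<epsilon> * norm a * norm b"
    if "norm a < \<rho>" "norm b < \<rho>" for a b
    using that by (intro second_difference_le) auto
  moreover have "\<rho> > 0" using d e by (simp add: \<rho>_def)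
  ultimately show ?thesis using that by blast
qed

lemma hessian_symmetric:
  fixes f :: "'a::euclidean_space \<Rightarrow> real"
  assumes "open U" "x \<in> U"
    and "\<And>y. y \<in> U \<Longrightarrow> (f has_derivative (\<lambda>h. G y \<bullet> h)) (at y)"
    and "\<And>y. y \<in> U \<Longrightarrow> (G has_derivative blinfun_apply (H y)) (at y)"
    and "continuous_on U H"
  shows "H x u \<bullet> v = H x v \<bullet> u"
proof -
  define c where "c = norm u * norm v"
  have "\<bar>H x u \<bullet> v - H x v \<bullet> u\<bar> \<le> 2 * \<epsilon> * c" if eps: "\<epsilon> > 0" for \<epsilon>
  proof -
    obtain \<rho> where \<rho>: "\<rho> > 0" and est: "\<And>a b. norm a < \<rho> \<Longrightarrow> norm b < \<rho> \<Longrightarrow>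
      \<bar>f (x + a + b) - f (x + a) - f (x + b) + f x - H x b \<bullet> a\<bar> \<le> \<epsilon> * norm a * norm b"
      using second_difference_estimate[OF assms eps] by blast
    \<comment> \<open>The second difference is symmetric in a and b, and both errors scale like \<tau>^2.\<close>
    define \<tau> where "\<tau> = \<rho> / (norm u + norm v + 1)"
    have D: "norm u + norm v + 1 > 0" by (simp add: add_nonneg_pos)
    hence \<tau>: "\<tau> > 0" "\<tau> * (norm u + norm v + 1) = \<rho>" using \<rho> by (simp_all add: \<tau>_def)
    have "\<tau> * norm u < \<tau> * (norm u + norm v + 1)" "\<tau> * norm v < \<tau> * (norm u + norm v + 1)"
      using \<tau>(1) norm_ge_zero[of u] norm_ge_zero[of v] by (intro mult_strict_left_mono; linarith)+
    hence small: "norm (\<tau> *\<^sub>R u) < \<rho>" "norm (\<tau> *\<^sub>R v) < \<rho>" using \<tau> by simp_all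
    have "x + \<tau> *\<^sub>R v + \<tau> *\<^sub>R u = x + \<tau> *\<^sub>R u + \<tau> *\<^sub>R v" by (simp add: algebra_simps)
    with est[OF small] est[OF small(2,1)]
    have scaled: "\<bar>H x (\<tau> *\<^sub>R u) \<bullet> (\<tau> *\<^sub>R v) - H x (\<tau> *\<^sub>R v) \<bullet> (\<tau> *\<^sub>R u)\<bar>
        \<le> 2 * \<epsilon> * (norm (\<tau> *\<^sub>R u) * norm (\<tau> *\<^sub>R v))"
      by (simp add: algebra_simps)
    have "H x (\<tau> *\<^sub>R u) \<bullet> (\<tau> *\<^sub>R v) - H x (\<tau> *\<^sub>R v) \<bullet> (\<tau> *\<^sub>R u)
        = \<tau>^2 * (H x u \<bullet> v - H x v \<bullet> u)"
      by (simp add: blinfun.scaleR_right power2_eq_square algebra_simps)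
    hence "\<tau>^2 * \<bar>H x u \<bullet> v - H x v \<bullet> u\<bar>
        = \<bar>H x (\<tau> *\<^sub>R u) \<bullet> (\<tau> *\<^sub>R v) - H x (\<tau> *\<^sub>R v) \<bullet> (\<tau> *\<^sub>R u)\<bar>"
      by (simp add: abs_mult)
    also note scaled
    also have "norm (\<tau> *\<^sub>R u) * norm (\<tau> *\<^sub>R v) = \<tau>^2 * c"
      using \<tau> by (simp add: c_def power2_eq_square)
    finally have "\<tau>^2 * \<bar>H x u \<bullet> v - H x v \<bullet> u\<bar> \<le> \<tau>^2 * (2 * \<epsilon> * c)"
      by (simp add: algebra_simps)
    thus ?thesis using \<tau> by simp
  qed
  note bound = this
  have "\<bar>H x u \<bullet> v - H x v \<bullet> u\<bar> \<le> 0 + e" if "e > 0" for e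
  proof -
    have "c \<ge> 0" by (simp add: c_def)
    hence "2 * (e / (2 * (c + 1))) * c \<le> e" using that by (simp add: field_simps)
    moreover have "e / (2 * (c + 1)) > 0" using that \<open>c \<ge> 0\<close> by simp
    ultimately show ?thesis using bound[of "e / (2 * (c + 1))"] by simp
  qed
  then have "\<bar>H x u \<bullet> v - H x v \<bullet> u\<bar> \<le> 0" by (rule field_le_epsilon)
  thus ?thesis by simp
qed

section \<open>Tangent spaces\<close>

lemma chart_direction_in_tangent_space:
  fixes \<Phi> \<Psi> :: "'a::euclidean_space \<Rightarrow> 'a"
  assumes hom: "homeomorphism W (\<Phi> ` W) \<Phi> \<Psi>" and "open (\<Phi> ` W)" "subspace L"
    and slice: "\<Phi> ` (S \<inter> W) = \<Phi> ` W \<inter> L"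
    and D: "(\<Psi> has_derivative D) (at (\<Phi> p))" and p: "p \<in> S \<inter> W" and "l \<in> L"
  shows "D l \<in> tangent_space S p"
proof -
  \<comment> \<open>The curve s \<mapsto> \<Psi> (\<Phi> p + s l) runs in S, since \<Phi> p + s l stays in the flat slice L.\<close>
  define \<gamma> where "\<gamma> s = \<Psi> (\<Phi> p + s *\<^sub>R l)" for s
  have "\<Phi> p \<in> \<Phi> ` W" "\<Phi> p \<in> L" using p slice by auto
  then obtain e0 where e0: "e0 > 0" "ball (\<Phi> p) e0 \<subseteq> \<Phi> ` W" using \<open>open (\<Phi> ` W)\<close> openE by metis
  define e where "e = e0 / (norm l + 1)"
  have nl: "norm l + 1 > 0" using norm_ge_zero[of l] by linarith
  hence e: "e > 0" "e * (norm l + 1) = e0" using e0 by (simp_all add: e_def)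
  have "\<gamma> s \<in> S" if s: "s \<in> {-e<..<e}" for s
  proof -
    have "\<bar>s\<bar> * norm l \<le> \<bar>s\<bar> * (norm l + 1)" by (simp add: mult_left_mono)
    also have "\<dots> < e0" using s e nl by (metis abs_less_iff greaterThanLessThan_iff minus_less_iff mult_strict_right_mono)
    finally have "\<Phi> p + s *\<^sub>R l \<in> \<Phi> ` W"
      using e0(2) by (auto simp: dist_norm)
    moreover have "\<Phi> p + s *\<^sub>R l \<in> L" using \<open>subspace L\<close> \<open>\<Phi> p \<in> L\<close> \<open>l \<in> L\<close>
      by (simp add: subspace_add subspace_scale)
    ultimately obtain q where "q \<in> S \<inter> W" "\<Phi> p + s *\<^sub>R l = \<Phi> q" using slice by blast
    thus ?thesis using homeomorphism_apply1[OF hom] by (simp add: \<gamma>_def)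
  qed
  moreover have "\<gamma> 0 = p" using homeomorphism_apply1[OF hom] p by (simp add: \<gamma>_def)
  moreover have "((\<lambda>s. \<Phi> p + s *\<^sub>R l) has_derivative (\<lambda>s. s *\<^sub>R l)) (at 0)"
    by (intro derivative_eq_intros) auto
  from has_derivative_compose[OF this] D
  have "((\<lambda>s. \<Psi> (\<Phi> p + s *\<^sub>R l)) has_derivative (\<lambda>s. D (s *\<^sub>R l))) (at 0)" by simp
  hence "(\<gamma> has_derivative (\<lambda>s. s *\<^sub>R D l)) (at 0)"
    unfolding \<gamma>_def using bounded_linear.linear[OF has_derivative_bounded_linear[OF D]]
    by (simp add: linear_scale)
  ultimately show ?thesis
    using e unfolding tangent_space_def has_vector_derivative_def by blast
qed

lemma chart_derivative_inj:
  fixes \<Phi> \<Psi> :: "'a::real_normed_vector \<Rightarrow> 'a"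
  assumes hom: "homeomorphism W (\<Phi> ` W) \<Phi> \<Psi>" and "open (\<Phi> ` W)" and y: "y \<in> \<Phi> ` W"
    and D: "(\<Psi> has_derivative D) (at y)" and D': "(\<Phi> has_derivative D') (at (\<Psi> y))"
  shows "inj D"
proof -
  have "((\<lambda>z. \<Phi> (\<Psi> z)) has_derivative (\<lambda>v. D' (D v))) (at y)"
    by (rule has_derivative_compose[OF D D'])
  moreover have "((\<lambda>z. \<Phi> (\<Psi> z)) has_derivative (\<lambda>v. v)) (at y)"
    by (rule has_derivative_transform_within_open[OF has_derivative_ident \<open>open (\<Phi> ` W)\<close> y])
       (use homeomorphism_apply2[OF hom] in auto)
  ultimately have "(\<lambda>v. D' (D v)) = (\<lambda>v. v)" by (rule has_derivative_unique)
  thus ?thesis by (metis injI)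
qed

lemma tangent_space_subset_kernel:
  assumes "\<And>q. q \<in> S \<Longrightarrow> G q = 0" and A: "(G has_derivative A) (at p)"
  shows "tangent_space S p \<subseteq> {v. A v = 0}"
proof
  fix v assume "v \<in> tangent_space S p"
  then obtain \<gamma> e where "e > 0" "\<gamma> 0 = p" "\<And>t. t \<in> {-e<..<e} \<Longrightarrow> \<gamma> t \<in> S"
    and \<gamma>: "(\<gamma> has_derivative (\<lambda>s. s *\<^sub>R v)) (at 0)"
    unfolding tangent_space_def has_vector_derivative_def by blast
  hence "((\<lambda>s. G (\<gamma> s)) has_derivative (\<lambda>s. A (s *\<^sub>R v))) (at 0)"
    using has_derivative_compose[OF \<gamma>] A by simp
  moreover have "((\<lambda>s. G (\<gamma> s)) has_derivative (\<lambda>s. 0)) (at 0)"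
    by (rule has_derivative_transform_within_open[OF has_derivative_const, of "{-e<..<e}"])
       (use \<open>e > 0\<close> \<open>\<And>t. t \<in> {-e<..<e} \<Longrightarrow> \<gamma> t \<in> S\<close> assms(1) in auto)
  ultimately have "(\<lambda>s. A (s *\<^sub>R v)) = (\<lambda>s. 0)" by (rule has_derivative_unique)
  from fun_cong[OF this, of 1] show "v \<in> {v. A v = 0}" by simp
qed

lemma nearest_point_orthogonal_tangent_space:
  fixes y :: "'a::euclidean_space"
  assumes near: "\<And>q. q \<in> S \<Longrightarrow> dist y p \<le> dist y q" and "v \<in> tangent_space S p"
  shows "(y - p) \<bullet> v = 0"
proof -
  obtain \<gamma> e where "e > 0" "\<gamma> 0 = p" and inS: "\<And>t. t \<in> {-e<..<e} \<Longrightarrow> \<gamma> t \<in> S"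
    and \<gamma>: "(\<gamma> has_derivative (\<lambda>s. s *\<^sub>R v)) (at 0)"
    using assms(2) unfolding tangent_space_def has_vector_derivative_def by blast
  define \<phi> where "\<phi> s = (y - \<gamma> s) \<bullet> (y - \<gamma> s)" for s
  have "((\<lambda>s. y - \<gamma> s) has_derivative (\<lambda>h. - (h *\<^sub>R v))) (at 0)"
    using \<gamma> by (auto intro!: derivative_eq_intros)
  from has_derivative_inner[OF this this]
  have "(\<phi> has_derivative (\<lambda>h. (y - p) \<bullet> - (h *\<^sub>R v) + - (h *\<^sub>R v) \<bullet> (y - p))) (at 0)"
    unfolding \<phi>_def \<open>\<gamma> 0 = p\<close> .
  moreover have "\<phi> 0 \<le> \<phi> t" if "t \<in> {-e<..<e}" for t
  proof -
    have "dist y p \<le> dist y (\<gamma> t)" using near inS[OF that] by blast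
    hence "(dist y p)^2 \<le> (dist y (\<gamma> t))^2" by (simp add: power_mono)
    thus ?thesis by (simp add: \<phi>_def \<open>\<gamma> 0 = p\<close> dist_norm power2_norm_eq_inner)
  qed
  ultimately have "(\<lambda>h. (y - p) \<bullet> - (h *\<^sub>R v) + - (h *\<^sub>R v) \<bullet> (y - p)) = (\<lambda>h. 0)"
    using \<open>e > 0\<close> by (intro differential_zero_maxmin[of 0 "{-e<..<e}" \<phi>]) auto
  from fun_cong[OF this, of 1] show ?thesis by (simp add: inner_commute)
qed

lemma tangent_space_eq_kernel:
  fixes \<Phi> \<Psi> G :: "'a::euclidean_space \<Rightarrow> 'a"
  assumes hom: "homeomorphism W (\<Phi> ` W) \<Phi> \<Psi>" and "open (\<Phi> ` W)" "subspace L"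
    and slice: "\<Phi> ` (S \<inter> W) = \<Phi> ` W \<inter> L" and p: "p \<in> S \<inter> W"
    and D: "(\<Psi> has_derivative D) (at (\<Phi> p))" and D': "(\<Phi> has_derivative D') (at p)"
    and "\<And>q. q \<in> S \<Longrightarrow> G q = 0" and A: "(G has_derivative A) (at p)"
    and dim: "DIM('a) \<le> dim L + dim (range A)"
  shows "tangent_space S p = {v. A v = 0}" and "tangent_space S p = D ` L"
proof -
  have lin: "linear D" "linear A"
    using has_derivative_bounded_linear[OF D] has_derivative_bounded_linear[OF A]
    by (simp_all add: bounded_linear.linear)
  have DL: "D ` L \<subseteq> tangent_space S p"
    using chart_direction_in_tangent_space[OF hom \<open>open (\<Phi> ` W)\<close> \<open>subspace L\<close> slice D p] by blast
  have TA: "tangent_space S p \<subseteq> {v. A v = 0}"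
    using tangent_space_subset_kernel[OF assms(8) A] .
  have "\<Psi> (\<Phi> p) = p" using homeomorphism_apply1[OF hom] p by blast
  hence "inj D" using chart_derivative_inj[OF hom \<open>open (\<Phi> ` W)\<close> _ D] D' p by simp
  hence "dim (D ` L) = dim L" using lin(1) by (intro dim_image_eq) (auto simp: inj_on_def inj_def)
  hence "D ` L = {v. A v = 0}"
    using kernel_eq_if_dim_ge[OF lin(2) linear_subspace_image[OF lin(1) \<open>subspace L\<close>]] DL TA dim
    by auto
  thus "tangent_space S p = {v. A v = 0}" "tangent_space S p = D ` L" using DL TA by auto
qed

lemma minimum_manifold_tangent_spaces:
  fixes f :: "'a::euclidean_space \<Rightarrow> real" and H :: "'a \<Rightarrow> 'a \<Rightarrow>\<^sub>L 'a"
  assumes "open U"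
    and fG: "\<And>x. x \<in> U \<Longrightarrow> (f has_derivative (\<lambda>h. gradient f x \<bullet> h)) (at x)"
    and GH: "\<And>x. x \<in> U \<Longrightarrow> (gradient f has_derivative H x) (at x)"
    and "C1_submanifold k (minset f \<inter> U)"
    and rank: "\<And>p. p \<in> minset f \<inter> U \<Longrightarrow> dim (range (H p)) = DIM('a) - k"
    and x0: "x0 \<in> minset f \<inter> U"
  obtains W and N :: "'a \<Rightarrow> 'a \<Rightarrow>\<^sub>L 'a" and L :: "'a set"
  where "open W" "x0 \<in> W" "continuous_on W N"
    "\<And>p. p \<in> minset f \<inter> U \<inter> W \<Longrightarrow> tangent_space (minset f \<inter> U) p = {v. H p v = 0}"
    "\<And>p. p \<in> minset f \<inter> U \<inter> W \<Longrightarrow> tangent_space (minset f \<inter> U) p = N p ` L"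
proof -
  define S where "S = minset f \<inter> U"
  obtain W and \<Phi> \<Psi> :: "'a \<Rightarrow> 'a" and L where W: "open W" "x0 \<in> W" "open (\<Phi> ` W)"
    and hom: "homeomorphism W (\<Phi> ` W) \<Phi> \<Psi>" and C1: "C1_on W \<Phi>" "C1_on (\<Phi> ` W) \<Psi>"
    and L: "subspace L" "dim L = k" and slice: "\<Phi> ` (S \<inter> W) = \<Phi> ` W \<inter> L"
    using assms(4) x0 unfolding C1_submanifold_def S_def by blast
  obtain D\<Phi> where D\<Phi>: "\<And>x. x \<in> W \<Longrightarrow> (\<Phi> has_derivative blinfun_apply (D\<Phi> x)) (at x)"
    using C1(1) unfolding C1_on_def by blast
  obtain D\<Psi> where D\<Psi>: "\<And>y. y \<in> \<Phi> ` W \<Longrightarrow> (\<Psi> has_derivative blinfun_apply (D\<Psi> y)) (at y)"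
    and "continuous_on (\<Phi> ` W) D\<Psi>"
    using C1(2) unfolding C1_on_def by blast
  have G0: "gradient f q = 0" if "q \<in> S" for q
    using inner_derivative_eq_0_at_local_min[OF \<open>open U\<close> _ _ fG] that by (simp add: S_def minset_def)
  have tangent: "tangent_space S p = {v. H p v = 0}" "tangent_space S p = D\<Psi> (\<Phi> p) ` L"
    if p: "p \<in> S \<inter> W" for p
  proof -
    have "dim L \<le> DIM('a)" by (rule dim_subset_UNIV)
    hence "DIM('a) \<le> dim L + dim (range (H p))" using rank[of p] p L(2) by (simp add: S_def)
    thus "tangent_space S p = {v. H p v = 0}" "tangent_space S p = D\<Psi> (\<Phi> p) ` L"
      using tangent_space_eq_kernel[OF hom W(3) L(1) slice p D\<Psi> D\<Phi> G0 GH] p by (auto simp: S_def)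
  qed
  have "continuous_on W (\<lambda>p. D\<Psi> (\<Phi> p))"
    using continuous_on_compose2[OF \<open>continuous_on (\<Phi> ` W) D\<Psi>\<close> homeomorphism_cont1[OF hom]] by blast
  with W(1,2) tangent that show ?thesis by (simp add: S_def Int_assoc)
qed

lemma hessian_pos_on_normal_at_minimum:
  fixes f :: "'a::euclidean_space \<Rightarrow> real" and H :: "'a \<Rightarrow> 'a \<Rightarrow>\<^sub>L 'a"
  assumes "open U" "continuous_on U H"
    and fG: "\<And>x. x \<in> U \<Longrightarrow> (f has_derivative (\<lambda>h. gradient f x \<bullet> h)) (at x)"
    and GH: "\<And>x. x \<in> U \<Longrightarrow> (gradient f has_derivative H x) (at x)"
    and p: "p \<in> minset f \<inter> U" and kernel: "tangent_space (minset f \<inter> U) p = {v. H p v = 0}"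
    and "u \<noteq> 0" and normal: "\<forall>v\<in>tangent_space (minset f \<inter> U) p. u \<bullet> v = 0"
  shows "0 < H p u \<bullet> u"
proof (rule psd_form_pos_off_kernel)
  have min: "f p \<le> f y" for y using p by (simp add: minset_def)
  show "linear (H p)" by (simp add: blinfun.bounded_linear_right bounded_linear.linear)
  show "H p v \<bullet> w = H p w \<bullet> v" for v w
    using hessian_symmetric[OF \<open>open U\<close> _ fG GH \<open>continuous_on U H\<close>] p by blast
  show "0 \<le> H p w \<bullet> w" for w
    using hessian_psd_at_local_min[OF \<open>open U\<close> _ min fG GH] p by blast
  show "u \<bullet> v = 0" if "H p v = 0" for v
    using that normal kernel by blast
qed fact

section \<open>The restricted secant inequality near the minimum set\<close>

lemma uniform_coercivity_on_compact:
  fixes H :: "'a::metric_space \<Rightarrow> 'b::euclidean_space \<Rightarrow>\<^sub>L 'b"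
    and N :: "'a \<Rightarrow> 'c::real_normed_vector \<Rightarrow>\<^sub>L 'b"
  assumes "compact A" "continuous_on A H" "continuous_on A N"
    and pos: "\<And>p u. p \<in> A \<Longrightarrow> u \<noteq> 0 \<Longrightarrow> (\<forall>l\<in>L. u \<bullet> N p l = 0) \<Longrightarrow> 0 < H p u \<bullet> u"
  obtains \<mu> where "\<mu> > 0"
    "\<And>p w. p \<in> A \<Longrightarrow> (\<forall>l\<in>L. w \<bullet> N p l = 0) \<Longrightarrow> \<mu> * (norm w)^2 \<le> H p w \<bullet> w"
proof -
  \<comment> \<open>Minimise the quadratic form over the compact set of admissible unit vectors.\<close>
  define C where "C = {z \<in> A \<times> sphere 0 1. \<forall>l\<in>L. snd z \<bullet> N (fst z) l = 0}"
  have AS: "compact (A \<times> sphere (0::'b) 1)" using \<open>compact A\<close> by (simp add: compact_Times)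
  have "closed {z \<in> A \<times> sphere 0 1. snd z \<bullet> N (fst z) l = 0}" for l
  proof (rule continuous_closed_preimage_constant)
    have "continuous_on (A \<times> sphere 0 1) (\<lambda>z. N (fst z))"
      by (rule continuous_on_compose2[OF \<open>continuous_on A N\<close> continuous_on_fst]) auto
    thus "continuous_on (A \<times> sphere 0 1) (\<lambda>z. snd z \<bullet> N (fst z) l)"
      by (intro continuous_intros)
  qed (use AS compact_imp_closed in blast)
  moreover have "C = (A \<times> sphere 0 1) \<inter> (\<Inter>l\<in>L. {z \<in> A \<times> sphere 0 1. snd z \<bullet> N (fst z) l = 0})"
    by (auto simp: C_def)
  ultimately have "compact C" using AS by (auto intro!: compact_Int_closed closed_INT)
  obtain \<mu> where \<mu>: "\<mu> > 0" "\<And>p u. (p, u) \<in> C \<Longrightarrow> \<mu> \<le> H p u \<bullet> u"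
  proof (cases "C = {}")
    case True
    thus ?thesis using that[of 1] by auto
  next
    case False
    have "continuous_on C (\<lambda>z. H (fst z))"
      by (rule continuous_on_compose2[OF \<open>continuous_on A H\<close> continuous_on_fst]) (auto simp: C_def)
    hence "continuous_on C (\<lambda>z. H (fst z) (snd z) \<bullet> snd z)" by (intro continuous_intros)
    then obtain z0 where z0: "z0 \<in> C" "\<And>z. z \<in> C \<Longrightarrow> H (fst z0) (snd z0) \<bullet> snd z0 \<le> H (fst z) (snd z) \<bullet> snd z"
      using continuous_attains_inf[OF \<open>compact C\<close> False] by blast
    have "0 < H (fst z0) (snd z0) \<bullet> snd z0" using z0(1) by (intro pos) (auto simp: C_def)
    with z0 show ?thesis using that[of "H (fst z0) (snd z0) \<bullet> snd z0"] by force
  qed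
  have "\<mu> * (norm w)^2 \<le> H p w \<bullet> w" if "p \<in> A" "\<forall>l\<in>L. w \<bullet> N p l = 0" for p w
  proof (cases "w = 0")
    case False
    hence "(p, w /\<^sub>R norm w) \<in> C" using that by (auto simp: C_def)
    hence "\<mu> \<le> H p (w /\<^sub>R norm w) \<bullet> (w /\<^sub>R norm w)" by (rule \<mu>(2))
    also have "\<dots> = (H p w \<bullet> w) / (norm w)^2"
      by (simp add: blinfun.scaleR_right power2_eq_square divide_inverse)
    finally have "\<mu> \<le> (H p w \<bullet> w) / (norm w)^2" .
    thus ?thesis using False by (simp add: pos_le_divide_eq)
  qed simp
  with \<mu>(1) that show ?thesis by blast
qed

lemma closed_minset_Int_cball:
  assumes "continuous_on (cball x0 r) f" "cball x0 r \<subseteq> U" "x0 \<in> minset f"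
  shows "closed (minset f \<inter> U \<inter> cball x0 r)"
proof -
  have "minset f \<inter> U \<inter> cball x0 r = {y \<in> cball x0 r. f y \<le> f x0}"
    using assms(2,3) by (auto simp: minset_def intro: order_trans)
  moreover have "closed {y \<in> cball x0 r. f y \<le> f x0}"
    by (intro continuous_on_closed_Collect_le assms(1) continuous_on_const closed_cball)
  ultimately show ?thesis by simp
qed

lemma hessian_coercive_normal_to_minimum_manifold:
  fixes f :: "'a::euclidean_space \<Rightarrow> real" and H :: "'a \<Rightarrow> 'a \<Rightarrow>\<^sub>L 'a"
  assumes "open U" "continuous_on U H"
    and fG: "\<And>x. x \<in> U \<Longrightarrow> (f has_derivative (\<lambda>h. gradient f x \<bullet> h)) (at x)"
    and GH: "\<And>x. x \<in> U \<Longrightarrow> (gradient f has_derivative H x) (at x)"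
    and "C1_submanifold k (minset f \<inter> U)"
    and rank: "\<And>p. p \<in> minset f \<inter> U \<Longrightarrow> dim (range (H p)) = DIM('a) - k"
    and x0: "x0 \<in> minset f \<inter> U"
  obtains r \<mu> where "0 < r" "cball x0 r \<subseteq> U" "0 < \<mu>"
    "\<And>p w. p \<in> minset f \<inter> U \<inter> cball x0 r \<Longrightarrow> (\<forall>v\<in>tangent_space (minset f \<inter> U) p. w \<bullet> v = 0) \<Longrightarrow>
      \<mu> * (norm w)^2 \<le> H p w \<bullet> w"
proof -
  define S where "S = minset f \<inter> U"
  obtain W and N :: "'a \<Rightarrow> 'a \<Rightarrow>\<^sub>L 'a" and L :: "'a set" where W: "open W" "x0 \<in> W"
    and "continuous_on W N" and kernel: "\<And>p. p \<in> S \<inter> W \<Longrightarrow> tangent_space S p = {v. H p v = 0}"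
    and image: "\<And>p. p \<in> S \<inter> W \<Longrightarrow> tangent_space S p = N p ` L"
    using minimum_manifold_tangent_spaces[OF assms(1) fG GH assms(5) rank x0] unfolding S_def by blast
  obtain r where r: "0 < r" "cball x0 r \<subseteq> U \<inter> W"
    using open_contains_cball[of "U \<inter> W"] \<open>open U\<close> W x0 by blast
  define A where "A = S \<inter> cball x0 r"
  have "isCont f y" if "y \<in> cball x0 r" for y
    using fG[of y] that r has_derivative_continuous by blast
  hence "closed A" unfolding A_def S_def using r x0
    by (intro closed_minset_Int_cball continuous_at_imp_continuous_on) auto
  hence "compact A" by (simp add: A_def compact_eq_bounded_closed bounded_Int)
  have AW: "A \<subseteq> S \<inter> W" "A \<subseteq> U" using r by (auto simp: A_def S_def)
  have cH: "continuous_on A H" using \<open>continuous_on U H\<close> AW(2) by (rule continuous_on_subset)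
  have cN: "continuous_on A N" using \<open>continuous_on W N\<close> AW(1) by (blast intro: continuous_on_subset)
  have pos: "0 < H p u \<bullet> u"
    if p: "p \<in> A" and "u \<noteq> 0" and "\<forall>l\<in>L. u \<bullet> N p l = 0" for p u
  proof (rule hessian_pos_on_normal_at_minimum[OF assms(1,2) fG GH])
    show "p \<in> minset f \<inter> U" "tangent_space (minset f \<inter> U) p = {v. H p v = 0}"
      using AW p kernel[of p] by (auto simp: S_def)
    have "tangent_space (minset f \<inter> U) p = N p ` L" using AW p image[of p] by (auto simp: S_def)
    thus "\<forall>v\<in>tangent_space (minset f \<inter> U) p. u \<bullet> v = 0"
      using \<open>\<forall>l\<in>L. u \<bullet> N p l = 0\<close> by auto
  qed (use \<open>u \<noteq> 0\<close> in auto)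
  obtain \<mu> where \<mu>: "0 < \<mu>"
    "\<And>p w. p \<in> A \<Longrightarrow> \<forall>l\<in>L. w \<bullet> N p l = 0 \<Longrightarrow> \<mu> * (norm w)^2 \<le> H p w \<bullet> w"
    using uniform_coercivity_on_compact[OF \<open>compact A\<close> cH cN pos] by blast
  have "\<mu> * (norm w)^2 \<le> H p w \<bullet> w"
    if "p \<in> S \<inter> cball x0 r" "\<forall>v\<in>tangent_space S p. w \<bullet> v = 0" for p w
    using \<mu>(2)[of p w] that image[of p] AW by (auto simp: A_def)
  with r \<mu>(1) that show ?thesis by (auto simp: S_def)
qed

definition restricted_secant_on :: "'a::real_inner set \<Rightarrow> ('a \<Rightarrow> 'a) \<Rightarrow> 'a set \<Rightarrow> real \<Rightarrow> real \<Rightarrow> bool" where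
  "restricted_secant_on B G S \<mu> L \<longleftrightarrow> (\<forall>y\<in>B. \<exists>p\<in>S. infdist y S = dist y p \<and>
     \<mu> * (dist y p)^2 \<le> G y \<bullet> (y - p) \<and> norm (G y) \<le> L * dist y p)"

lemma nearest_point_near_center:
  fixes S :: "'a::heine_borel set"
  assumes "closed (S \<inter> cball x0 r)" "x0 \<in> S" "dist x0 y < s" "2 * s \<le> r"
  obtains p where "p \<in> S \<inter> cball x0 r" "infdist y S = dist y p" "dist y p < s"
proof -
  have "0 \<le> r" using assms(3,4) zero_le_dist[of x0 y] by linarith
  hence x0: "x0 \<in> S \<inter> cball x0 r" using assms(2) by simp
  then obtain p where p: "p \<in> S \<inter> cball x0 r" "infdist y (S \<inter> cball x0 r) = dist y p"
    using infdist_attains_inf[OF assms(1)] by blast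
  have "dist y p \<le> dist y x0" using infdist_le[OF x0, of y] p(2) by simp
  hence "dist y p < s" using assms(3) by (simp add: dist_commute)
  have "dist y p \<le> dist y q" if "q \<in> S" for q
  proof (cases "q \<in> cball x0 r")
    case True
    thus ?thesis using infdist_le[of q "S \<inter> cball x0 r" y] p(2) that by simp
  next
    case False
    hence "r < dist x0 q" by simp
    moreover have "dist x0 q \<le> dist x0 y + dist y q" by (rule dist_triangle)
    ultimately show ?thesis using \<open>dist y p < s\<close> assms(3,4) by linarith
  qed
  moreover have "S \<noteq> {}" using p(1) by blast
  ultimately have "dist y p \<le> infdist y S"
    unfolding infdist_notempty[OF \<open>S \<noteq> {}\<close>] by (intro cINF_greatest) auto
  hence "infdist y S = dist y p" using p(1) infdist_le[of p S y] by simp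
  with p(1) \<open>dist y p < s\<close> that show ?thesis by blast
qed

lemma secant_estimate_by_linearization:
  fixes G :: "'a::euclidean_space \<Rightarrow> 'a" and H :: "'a \<Rightarrow> 'a \<Rightarrow>\<^sub>L 'a"
  assumes "convex T" "y \<in> T" "p \<in> T" "G p = 0"
    and GH: "\<And>z. z \<in> T \<Longrightarrow> (G has_derivative H z) (at z)"
    and near: "\<And>z. z \<in> T \<Longrightarrow> norm (H z - H p) \<le> \<epsilon>"
    and bound: "\<And>z. z \<in> T \<Longrightarrow> norm (H z) \<le> L"
    and quad: "\<mu> * (norm (y - p))^2 \<le> H p (y - p) \<bullet> (y - p)"
  shows "(\<mu> - \<epsilon>) * (dist y p)^2 \<le> G y \<bullet> (y - p)" and "norm (G y) \<le> L * dist y p"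
proof -
  define w where "w = y - p"
  have "norm (G y - G p - H p (y - p)) \<le> \<epsilon> * norm (y - p)"
    by (rule linearization_error_le[OF assms(1,3,2) GH near])
  hence lin: "norm (G y - H p w) \<le> \<epsilon> * norm w" using \<open>G p = 0\<close> by (simp add: w_def)
  have "\<bar>(G y - H p w) \<bullet> w\<bar> \<le> \<epsilon> * (norm w)^2"
    using order_trans[OF Cauchy_Schwarz_ineq2 mult_right_mono[OF lin norm_ge_zero]]
    by (simp add: power2_eq_square mult.assoc)
  moreover have "G y \<bullet> w = H p w \<bullet> w + (G y - H p w) \<bullet> w" by (simp add: inner_diff_left)
  ultimately have "(\<mu> - \<epsilon>) * (norm w)^2 \<le> G y \<bullet> w"
    using quad by (simp add: w_def abs_le_iff left_diff_distrib)
  thus "(\<mu> - \<epsilon>) * (dist y p)^2 \<le> G y \<bullet> (y - p)" by (simp add: w_def dist_norm)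
  have "norm (G y - G p - blinfun_apply 0 (y - p)) \<le> L * norm (y - p)"
    by (rule linearization_error_le[OF assms(1,3,2) GH]) (use bound in auto)
  thus "norm (G y) \<le> L * dist y p" using \<open>G p = 0\<close> by (simp add: dist_norm)
qed

lemma restricted_secant_from_coercivity:
  fixes G :: "'a::euclidean_space \<Rightarrow> 'a" and H :: "'a \<Rightarrow> 'a \<Rightarrow>\<^sub>L 'a"
  assumes "x0 \<in> S" "0 < r" "closed (S \<inter> cball x0 r)" "0 < \<mu>"
    and GH: "\<And>y. y \<in> cball x0 r \<Longrightarrow> (G has_derivative H y) (at y)"
    and "continuous_on (cball x0 r) H"
    and G0: "\<And>p. p \<in> S \<Longrightarrow> G p = 0"
    and coercive: "\<And>p w. p \<in> S \<inter> cball x0 r \<Longrightarrow> (\<forall>v\<in>tangent_space S p. w \<bullet> v = 0) \<Longrightarrow>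
      \<mu> * (norm w)^2 \<le> H p w \<bullet> w"
  obtains s L where "0 < s" "0 \<le> L" "restricted_secant_on (ball x0 s) G S (\<mu> / 2) L"
proof -
  have "compact (H ` cball x0 r)"
    using \<open>continuous_on (cball x0 r) H\<close> by (rule compact_continuous_image) simp
  then obtain L where "0 < L" "\<And>z. z \<in> H ` cball x0 r \<Longrightarrow> norm z \<le> L"
    using compact_imp_bounded bounded_pos by metis
  hence L: "0 \<le> L" "\<And>y. y \<in> cball x0 r \<Longrightarrow> norm (H y) \<le> L" by auto
  have "uniformly_continuous_on (cball x0 r) H"
    using \<open>continuous_on (cball x0 r) H\<close> by (rule compact_uniformly_continuous) simp
  then obtain \<rho> where \<rho>: "\<rho> > 0"
    "\<And>y z. y \<in> cball x0 r \<Longrightarrow> z \<in> cball x0 r \<Longrightarrow> dist z y < \<rho> \<Longrightarrow> dist (H z) (H y) < \<mu> / 2"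
    using \<open>0 < \<mu>\<close> unfolding uniformly_continuous_on_def by (meson half_gt_zero)
  define s where "s = min (r / 2) \<rho>"
  have s: "0 < s" "2 * s \<le> r" "s \<le> \<rho>" using \<open>0 < r\<close> \<rho>(1) by (auto simp: s_def)
  have "restricted_secant_on (ball x0 s) G S (\<mu> / 2) L"
    unfolding restricted_secant_on_def
  proof
    fix y assume "y \<in> ball x0 s"
    then obtain p where p: "p \<in> S \<inter> cball x0 r" "infdist y S = dist y p" "dist y p < s"
      using nearest_point_near_center[OF assms(3,1) _ s(2)] by auto
    have "y \<in> cball x0 r" using \<open>y \<in> ball x0 s\<close> s by auto
    hence seg: "closed_segment p y \<subseteq> cball x0 r" using p(1) by (intro closed_segment_subset) auto
    have "dist y p \<le> dist y q" if "q \<in> S" for q using p(2) infdist_le[OF that, of y] by simp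
    hence "(y - p) \<bullet> v = 0" if "v \<in> tangent_space S p" for v
      using nearest_point_orthogonal_tangent_space that by blast
    hence quad: "\<mu> * (norm (y - p))^2 \<le> H p (y - p) \<bullet> (y - p)"
      using coercive[OF p(1)] by (simp add: inner_commute)
    have near: "norm (H z - H p) \<le> \<mu> / 2" if z: "z \<in> closed_segment p y" for z
    proof -
      have "dist z p < \<rho>" using dist_in_closed_segment[OF z] p(3) s(3) by (simp add: dist_commute)
      hence "dist (H z) (H p) < \<mu> / 2" using \<rho>(2) seg z p(1) by blast
      thus ?thesis by (simp add: dist_norm)
    qed
    have "G p = 0" using G0 p(1) by blast
    have "(G has_derivative H z) (at z)" "norm (H z) \<le> L" if "z \<in> closed_segment p y" for z
      using GH L(2) seg that by blast+
    note estimate = secant_estimate_by_linearization[where T = "closed_segment p y" and \<epsilon> = "\<mu> / 2",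
      OF convex_closed_segment ends_in_segment(2,1) \<open>G p = 0\<close> this(1) near this(2) quad]
    have secant: "\<mu> / 2 * (dist y p)^2 \<le> G y \<bullet> (y - p)" "norm (G y) \<le> L * dist y p"
      using estimate by simp_all
    with p show "\<exists>p\<in>S. infdist y S = dist y p \<and> \<mu> / 2 * (dist y p)^2 \<le> G y \<bullet> (y - p) \<and>
        norm (G y) \<le> L * dist y p" by blast
  qed
  with s(1) L(1) that show ?thesis by blast
qed

lemma restricted_secant_near_minimum_manifold:
  fixes f :: "'a::euclidean_space \<Rightarrow> real"
  assumes "open U" "C3_on U f" "C1_submanifold k (minset f \<inter> U)"
    and rank: "\<forall>\<theta>\<in>minset f \<inter> U. dim (range (hessian f \<theta>)) = DIM('a) - k"
    and x0: "x0 \<in> minset f \<inter> U"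
  obtains s \<mu> L where "0 < s" "0 < \<mu>" "0 \<le> L"
    "restricted_secant_on (ball x0 s) (gradient f) (minset f \<inter> U) \<mu> L"
proof -
  obtain H :: "'a \<Rightarrow> 'a \<Rightarrow>\<^sub>L 'a" where H: "continuous_on U H"
    and fG: "\<And>x. x \<in> U \<Longrightarrow> (f has_derivative (\<lambda>h. gradient f x \<bullet> h)) (at x)"
    and GH: "\<And>x. x \<in> U \<Longrightarrow> (gradient f has_derivative H x) (at x)"
    and hess: "\<And>x. x \<in> U \<Longrightarrow> hessian f x = blinfun_apply (H x)"
    using C3_on_imp_gradient_hessian[OF assms(1,2)] by blast
  have rank': "dim (range (H p)) = DIM('a) - k" if "p \<in> minset f \<inter> U" for p
    using rank that hess by auto
  obtain r \<mu> where r: "0 < r" "cball x0 r \<subseteq> U" and "0 < \<mu>"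
    and coercive: "\<And>p w. p \<in> minset f \<inter> U \<inter> cball x0 r \<Longrightarrow>
      (\<forall>v\<in>tangent_space (minset f \<inter> U) p. w \<bullet> v = 0) \<Longrightarrow> \<mu> * (norm w)^2 \<le> H p w \<bullet> w"
    using hessian_coercive_normal_to_minimum_manifold[OF assms(1) H fG GH assms(3) rank' x0] by blast
  have "isCont f y" if "y \<in> cball x0 r" for y
    using fG[of y] that r has_derivative_continuous by blast
  hence "closed (minset f \<inter> U \<inter> cball x0 r)" using r x0
    by (intro closed_minset_Int_cball continuous_at_imp_continuous_on) auto
  moreover have "gradient f p = 0" if "p \<in> minset f \<inter> U" for p
    using inner_derivative_eq_0_at_local_min[OF assms(1) _ _ fG] that by (simp add: minset_def)
  ultimately obtain s L where "0 < s" "0 \<le> L"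
    "restricted_secant_on (ball x0 s) (gradient f) (minset f \<inter> U) (\<mu> / 2) L"
    using restricted_secant_from_coercivity[OF x0 r(1) _ \<open>0 < \<mu>\<close> _ continuous_on_subset[OF H r(2)]]
      GH r(2) coercive by blast
  with \<open>0 < \<mu>\<close> that[of s "\<mu> / 2" L] show ?thesis by simp
qed

section \<open>Gradient flows\<close>

lemma has_real_derivative_weighted_sq_dist:
  fixes \<theta> :: "real \<Rightarrow> 'a::real_inner"
  assumes "(\<theta> has_vector_derivative v) (at \<tau>)"
  shows "((\<lambda>u. exp (c * u) * ((\<theta> u - p) \<bullet> (\<theta> u - p))) has_real_derivative
    exp (c * \<tau>) * (c * ((\<theta> \<tau> - p) \<bullet> (\<theta> \<tau> - p)) + 2 * ((\<theta> \<tau> - p) \<bullet> v))) (at \<tau>)"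
proof -
  have "((\<lambda>u. \<theta> u - p) has_derivative (\<lambda>h. h *\<^sub>R v)) (at \<tau>)"
    using assms unfolding has_vector_derivative_def by (auto intro!: derivative_eq_intros)
  from has_derivative_inner[OF this this]
  have sq: "((\<lambda>u. (\<theta> u - p) \<bullet> (\<theta> u - p)) has_real_derivative 2 * ((\<theta> \<tau> - p) \<bullet> v)) (at \<tau>)"
    unfolding has_field_derivative_def
    by (rule has_derivative_eq_rhs) (simp add: fun_eq_iff inner_commute algebra_simps)
  have "((\<lambda>u. exp (c * u)) has_real_derivative exp (c * \<tau>) * c) (at \<tau>)"
    by (auto intro!: derivative_eq_intros)
  from DERIV_mult[OF this sq] show ?thesis
    by (rule DERIV_cong) (simp add: algebra_simps)
qed

lemma flow_infdist_decay:
  fixes \<theta> :: "real \<Rightarrow> 'a::euclidean_space"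
  assumes sec: "restricted_secant_on B G S \<mu> L"
    and cont: "continuous_on {0..} \<theta>" and der: "\<And>t. 0 < t \<Longrightarrow> (\<theta> has_vector_derivative - G (\<theta> t)) (at t)"
    and "0 \<le> T" and inB: "\<And>\<tau>. \<tau> \<in> {0<..<T} \<Longrightarrow> \<theta> \<tau> \<in> B"
  shows "infdist (\<theta> T) S \<le> exp (- \<mu> * T) * infdist (\<theta> 0) S"
proof -
  define D where "D t = infdist (\<theta> t) S" for t
  define g where "g t = exp (2 * \<mu> * t) * (D t)^2" for t
  \<comment> \<open>At time \<tau>, g is touched from above by the same expression with the nearest point p frozen.\<close>
  have "g T \<le> g 0"
  proof (rule touching_derivative_nonpos_imp_le[OF \<open>0 \<le> T\<close>])
    show "continuous_on {0..T} g" unfolding g_def D_def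
      by (intro continuous_intros continuous_on_infdist continuous_on_subset[OF cont]) auto
    fix \<tau> assume \<tau>: "\<tau> \<in> {0<..<T}"
    then obtain p where p: "p \<in> S" "D \<tau> = dist (\<theta> \<tau>) p"
      "\<mu> * (dist (\<theta> \<tau>) p)^2 \<le> G (\<theta> \<tau>) \<bullet> (\<theta> \<tau> - p)"
      using sec inB[OF \<tau>] unfolding restricted_secant_on_def D_def by blast
    define k where "k u = exp (2 * \<mu> * u) * ((\<theta> u - p) \<bullet> (\<theta> u - p))" for u
    have sq: "(\<theta> u - p) \<bullet> (\<theta> u - p) = (dist (\<theta> u) p)^2" for u
      by (simp add: dist_norm power2_norm_eq_inner)
    have "(k has_real_derivative exp (2 * \<mu> * \<tau>) * (2 * \<mu> * (dist (\<theta> \<tau>) p)^2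
        - 2 * (G (\<theta> \<tau>) \<bullet> (\<theta> \<tau> - p)))) (at \<tau>)"
      using has_real_derivative_weighted_sq_dist[OF der, of \<tau> "2 * \<mu>" p] \<tau>
      unfolding k_def sq by (simp add: inner_commute)
    moreover have "exp (2 * \<mu> * \<tau>) * (2 * \<mu> * (dist (\<theta> \<tau>) p)^2 - 2 * (G (\<theta> \<tau>) \<bullet> (\<theta> \<tau> - p))) \<le> 0"
      using p(3) by (simp add: mult_nonneg_nonpos)
    moreover have "k \<tau> = g \<tau>" by (simp add: k_def g_def sq p(2))
    moreover have "g (\<tau> + h) \<le> k (\<tau> + h)" for h
    proof -
      have "(D (\<tau> + h))^2 \<le> (dist (\<theta> (\<tau> + h)) p)^2"
        unfolding D_def by (intro power_mono infdist_le[OF p(1)] infdist_nonneg)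
      thus ?thesis by (simp add: g_def k_def sq)
    qed
    ultimately show "\<exists>k k'. (k has_real_derivative k') (at \<tau>) \<and> k' \<le> 0 \<and> k \<tau> = g \<tau> \<and>
      (\<forall>h>0. g (\<tau> + h) \<le> k (\<tau> + h))" by blast
  qed
  moreover have "g T = (exp (\<mu> * T) * D T)^2"
    by (simp add: g_def power_mult_distrib exp_add[symmetric] power2_eq_square algebra_simps)
  ultimately have "(exp (\<mu> * T) * D T)^2 \<le> (D 0)^2" by (simp add: g_def)
  hence "exp (\<mu> * T) * D T \<le> D 0" by (rule power2_le_imp_le) (simp add: D_def infdist_nonneg)
  thus ?thesis by (simp add: D_def exp_minus field_simps)
qed

lemma flow_displacement_le:
  fixes \<theta> :: "real \<Rightarrow> 'a::euclidean_space"
  assumes sec: "restricted_secant_on B G S \<mu> L" and "0 < \<mu>" "0 \<le> L"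
    and cont: "continuous_on {0..} \<theta>" and der: "\<And>t. 0 < t \<Longrightarrow> (\<theta> has_vector_derivative - G (\<theta> t)) (at t)"
    and "0 \<le> T" and inB: "\<And>\<tau>. \<tau> \<in> {0<..<T} \<Longrightarrow> \<theta> \<tau> \<in> B"
  shows "norm (\<theta> T - \<theta> 0) \<le> L / \<mu> * infdist (\<theta> 0) S"
proof -
  define d0 where "d0 = infdist (\<theta> 0) S"
  define c where "c = L * d0 / \<mu>"
  define e where "e = sgn (\<theta> T - \<theta> 0)"
  \<comment> \<open>The speed |G| is at most L d0 exp(-\<mu> \<tau>), whose integral is bounded by c.\<close>
  define g where "g u = e \<bullet> (\<theta> u - \<theta> 0) + c * exp (- \<mu> * u)" for u
  have "g T \<le> g 0"
  proof (rule touching_derivative_nonpos_imp_le[OF \<open>0 \<le> T\<close>])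
    show "continuous_on {0..T} g" unfolding g_def
      by (intro continuous_intros continuous_on_subset[OF cont]) auto
    fix \<tau> assume \<tau>: "\<tau> \<in> {0<..<T}"
    then obtain p where p: "p \<in> S" "infdist (\<theta> \<tau>) S = dist (\<theta> \<tau>) p"
      "norm (G (\<theta> \<tau>)) \<le> L * dist (\<theta> \<tau>) p"
      using sec inB[OF \<tau>] unfolding restricted_secant_on_def by blast
    have "((\<lambda>u. e \<bullet> (\<theta> u - \<theta> 0)) has_real_derivative e \<bullet> - G (\<theta> \<tau>)) (at \<tau>)"
      using der[of \<tau>] \<tau> unfolding has_vector_derivative_def has_field_derivative_def
      by (auto intro!: derivative_eq_intros simp: fun_eq_iff inner_commute)
    hence gd: "(g has_real_derivative e \<bullet> - G (\<theta> \<tau>) - \<mu> * c * exp (- \<mu> * \<tau>)) (at \<tau>)"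
      unfolding g_def by (auto intro!: derivative_eq_intros)
    have "infdist (\<theta> \<tau>) S \<le> exp (- \<mu> * \<tau>) * d0"
      unfolding d0_def using \<tau> inB by (intro flow_infdist_decay[OF sec cont der]) auto
    hence "e \<bullet> - G (\<theta> \<tau>) \<le> \<mu> * c * exp (- \<mu> * \<tau>)"
    proof -
      have "e \<bullet> - G (\<theta> \<tau>) \<le> norm e * norm (G (\<theta> \<tau>))"
        using Cauchy_Schwarz_ineq2[of e "- G (\<theta> \<tau>)"] by simp
      also have "\<dots> \<le> norm (G (\<theta> \<tau>))" by (simp add: e_def norm_sgn)
      also have "\<dots> \<le> L * (exp (- \<mu> * \<tau>) * d0)"
        using p(2,3) \<open>infdist (\<theta> \<tau>) S \<le> _\<close> \<open>0 \<le> L\<close> by (metis mult_left_mono order_trans)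
      finally show ?thesis using \<open>0 < \<mu>\<close> by (simp add: c_def algebra_simps)
    qed
    with gd show "\<exists>k k'. (k has_real_derivative k') (at \<tau>) \<and> k' \<le> 0 \<and> k \<tau> = g \<tau> \<and>
      (\<forall>h>0. g (\<tau> + h) \<le> k (\<tau> + h))" by force
  qed
  moreover have "e \<bullet> (\<theta> T - \<theta> 0) = norm (\<theta> T - \<theta> 0)"
    by (cases "\<theta> T = \<theta> 0") (simp_all add: e_def sgn_div_norm power2_norm_eq_inner[symmetric] power2_eq_square)
  moreover have "0 \<le> c * exp (- \<mu> * T)"
    using \<open>0 < \<mu>\<close> \<open>0 \<le> L\<close> by (simp add: c_def d0_def infdist_nonneg)
  ultimately have "norm (\<theta> T - \<theta> 0) \<le> c" by (simp add: g_def)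
  thus ?thesis by (simp add: c_def d0_def)
qed

lemma flow_stays_in_ball:
  fixes \<theta> :: "real \<Rightarrow> 'a::euclidean_space"
  assumes sec: "restricted_secant_on (ball x0 s) G S \<mu> L" and "0 < \<mu>" "0 \<le> L"
    and cont: "continuous_on {0..} \<theta>" and der: "\<And>t. 0 < t \<Longrightarrow> (\<theta> has_vector_derivative - G (\<theta> t)) (at t)"
    and start: "dist x0 (\<theta> 0) + L / \<mu> * infdist (\<theta> 0) S < s" and "0 \<le> t"
  shows "\<theta> t \<in> ball x0 s"
proof (rule ccontr)
  assume "\<theta> t \<notin> ball x0 s"
  define Z where "Z = {\<tau> \<in> {0..t}. s \<le> dist x0 (\<theta> \<tau>)}"
  have "closed Z" unfolding Z_def
    by (rule continuous_on_closed_Collect_le) (auto intro!: continuous_intros continuous_on_subset[OF cont])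
  have "t \<in> Z" using \<open>0 \<le> t\<close> \<open>\<theta> t \<notin> ball x0 s\<close> by (auto simp: Z_def)
  have bdd: "bdd_below Z" by (rule bdd_belowI[of _ 0]) (auto simp: Z_def)
  define T where "T = Inf Z"
  have "T \<in> Z" unfolding T_def using closed_contains_Inf \<open>closed Z\<close> bdd \<open>t \<in> Z\<close> by blast
  hence T: "0 \<le> T" "s \<le> dist x0 (\<theta> T)" by (auto simp: Z_def)
  have "\<theta> \<tau> \<in> ball x0 s" if "\<tau> \<in> {0<..<T}" for \<tau>
  proof (rule ccontr)
    assume "\<theta> \<tau> \<notin> ball x0 s"
    with that \<open>T \<in> Z\<close> have "\<tau> \<in> Z" by (auto simp: Z_def)
    hence "T \<le> \<tau>" unfolding T_def using bdd by (rule cInf_lower)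
    thus False using that by simp
  qed
  from flow_displacement_le[OF sec \<open>0 < \<mu>\<close> \<open>0 \<le> L\<close> cont der \<open>0 \<le> T\<close> this]
  have "dist (\<theta> 0) (\<theta> T) \<le> L / \<mu> * infdist (\<theta> 0) S" by (simp add: dist_norm norm_minus_commute)
  hence "dist x0 (\<theta> T) < s" using start dist_triangle[of x0 "\<theta> T" "\<theta> 0"] by linarith
  thus False using T by simp
qed

lemma Vnbhd_start_bound:
  fixes y :: "'a::euclidean_space"
  assumes "y \<in> Vnbhd S R \<delta> x0" "0 \<le> c"
  shows "dist x0 y + c * infdist y S < R + \<delta> * (1 + c)"
proof -
  obtain x v where x: "y = x + v" "x \<in> cball x0 R" "x \<in> S" and "norm v < \<delta>"
    using assms(1) by (auto simp: Vnbhd_def)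
  have "dist x0 y \<le> dist x0 x + dist x y" by (rule dist_triangle)
  moreover have "dist x y = norm v" using x(1) by (simp add: dist_norm)
  moreover have "infdist y S \<le> dist x y" using infdist_le[OF x(3), of y] by (simp add: dist_commute)
  hence "c * infdist y S \<le> c * norm v" using \<open>dist x y = norm v\<close> \<open>0 \<le> c\<close> by (simp add: mult_left_mono)
  moreover have "c * norm v \<le> c * \<delta>" using \<open>norm v < \<delta>\<close> \<open>0 \<le> c\<close> by (simp add: mult_left_mono)
  ultimately show ?thesis using x(2) \<open>norm v < \<delta>\<close> by (simp add: algebra_simps)
qed

lemma gradient_flow_exp_decay_near:
  fixes f :: "'a::euclidean_space \<Rightarrow> real" and S :: "'a set"
  assumes sec: "restricted_secant_on (ball x0 s) (gradient f) S \<mu> L" and "0 < s" "0 < \<mu>" "0 \<le> L"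
  shows "\<exists>R0>0. \<exists>\<delta>0>0. \<exists>lam>0. \<forall>R\<in>{0<..R0}. \<forall>\<delta>\<in>{0<..\<delta>0}. \<forall>\<theta> :: real \<Rightarrow> 'a.
    \<theta> 0 \<in> Vnbhd S (R/2) \<delta> x0 \<and> gradient_flow f \<theta> \<longrightarrow>
    (\<forall>t\<ge>0. infdist (\<theta> t) S \<le> exp (-lam * t) * infdist (\<theta> 0) S)"
proof -
  define q where "q = 1 + L / \<mu>"
  define \<delta>0 where "\<delta>0 = s / (2 * q)"
  have q: "0 < q" using assms(3,4) by (simp add: q_def add_pos_nonneg)
  hence \<delta>0: "\<delta>0 * q = s / 2" by (simp add: \<delta>0_def)
  have "\<forall>R\<in>{0<..s}. \<forall>\<delta>\<in>{0<..\<delta>0}. \<forall>\<theta>. \<theta> 0 \<in> Vnbhd S (R/2) \<delta> x0 \<and> gradient_flow f \<theta> \<longrightarrow>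
    (\<forall>t\<ge>0. infdist (\<theta> t) S \<le> exp (- \<mu> * t) * infdist (\<theta> 0) S)"
  proof (intro ballI allI impI)
    fix R \<delta> t :: real and \<theta> :: "real \<Rightarrow> 'a"
    assume "R \<in> {0<..s}" "\<delta> \<in> {0<..\<delta>0}"
      and start: "\<theta> 0 \<in> Vnbhd S (R/2) \<delta> x0 \<and> gradient_flow f \<theta>" and "0 \<le> t"
    have "\<delta> * q \<le> \<delta>0 * q" using \<open>\<delta> \<in> _\<close> q by (intro mult_right_mono) auto
    hence "\<delta> * q \<le> s / 2" using \<delta>0 by simp
    moreover have "dist x0 (\<theta> 0) + L / \<mu> * infdist (\<theta> 0) S < R / 2 + \<delta> * q"
      using Vnbhd_start_bound[of "\<theta> 0" S "R/2" \<delta> x0 "L / \<mu>"] start assms(3,4) by (simp add: q_def)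
    ultimately have "dist x0 (\<theta> 0) + L / \<mu> * infdist (\<theta> 0) S < s" using \<open>R \<in> _\<close> by simp
    with start show "infdist (\<theta> t) S \<le> exp (- \<mu> * t) * infdist (\<theta> 0) S"
      using flow_infdist_decay[OF sec, of \<theta> t] flow_stays_in_ball[OF sec \<open>0 < \<mu>\<close> \<open>0 \<le> L\<close>, of \<theta>] \<open>0 \<le> t\<close>
      by (auto simp: gradient_flow_def)
  qed
  moreover have "0 < \<delta>0" using \<open>0 < s\<close> q by (simp add: \<delta>0_def)
  ultimately show ?thesis using \<open>0 < s\<close> \<open>0 < \<mu>\<close> by blast
qed

theorem proposition3p1:
  fixes f :: "'a::euclidean_space \<Rightarrow> real" and U :: "'a set" and k :: nat
  assumes "1 \<le> k" and "k \<le> DIM('a) - 1"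
    and "open U" and "C3_on U f"
    and "minset f \<inter> U \<noteq> {}"
    and "C1_submanifold k (minset f \<inter> U)"
    and "\<forall>\<theta>\<in>minset f \<inter> U. dim (range (hessian f \<theta>)) = DIM('a) - k"
  shows "\<forall>x0\<in>minset f \<inter> U. \<exists>R0>0. \<exists>\<delta>0>0. \<exists>lam>0.
           \<forall>R\<in>{0<..R0}. \<forall>\<delta>\<in>{0<..\<delta>0}. \<forall>\<theta> :: real \<Rightarrow> 'a.
             \<theta> 0 \<in> Vnbhd (minset f \<inter> U) (R/2) \<delta> x0 \<and> gradient_flow f \<theta> \<longrightarrow>
             (\<forall>t\<ge>0. infdist (\<theta> t) (minset f \<inter> U) \<le> exp (-lam * t) * infdist (\<theta> 0) (minset f \<inter> U))"
proof
  fix x0 assume "x0 \<in> minset f \<inter> U"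
  then obtain s \<mu> L where "0 < s" "0 < \<mu>" "0 \<le> L"
    and "restricted_secant_on (ball x0 s) (gradient f) (minset f \<inter> U) \<mu> L"
    by (rule restricted_secant_near_minimum_manifold[OF assms(3,4,6,7)])
  then show "\<exists>R0>0. \<exists>\<delta>0>0. \<exists>lam>0. \<forall>R\<in>{0<..R0}. \<forall>\<delta>\<in>{0<..\<delta>0}. \<forall>\<theta>.
      \<theta> 0 \<in> Vnbhd (minset f \<inter> U) (R/2) \<delta> x0 \<and> gradient_flow f \<theta> \<longrightarrow>
      (\<forall>t\<ge>0. infdist (\<theta> t) (minset f \<inter> U) \<le> exp (-lam * t) * infdist (\<theta> 0) (minset f \<inter> U))"
    by (intro gradient_flow_exp_decay_near)
qed

end
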